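(* Let $\mathscr{M}$ be a finite rooted transition system in which every state is reachable from the initial state (connected, reachable). Let $\mathrm{Lind}$ be the Lindenbaum algebra of the propositional geometric theory $\mathbb{T}$ whose atoms are $\Delta(s,t)$ for states $s,t$ and whose axioms are $\Delta(s,t)\vdash\bot$ whenever $s\not\to t$, and $\top\vdash\bigvee_{t:\,s\to t}\Delta(s,t)$ for every state $s$ having at least one successor. Let $\mathrm{Aut}(\mathrm{graph})$ be the group of permutations $\sigma$ of the states with $s\to t\iff\sigma(s)\to\sigma(t)$, and let $\varphi:\mathrm{Aut}(\mathrm{graph})\to\mathrm{Aut}(\mathrm{Lind})$ be the group homomorphism induced by the atom permutation $\Delta(s,t)\mapsto\Delta(\sigma(s),\sigma(t))$. Then either $\ker\varphi$ is trivial or $\ker\varphi=\mathrm{Aut}(\mathrm{graph})$. Specifically, $\ker\varphi$ is trivial whenever some state has at least two successors, and $\ker\varphi=\mathrm{Aut}(\mathrm{graph})$ when every state has at most one successor.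
   Context: The Lindenbaum algebra of a propositional geometric theory is the frame presented by the atoms as generators, modulo the relations induced by the axioms (the quotient of the free frame on the atoms). *)

theory Defs
  imports "HOL-Combinatorics.Permutations"
begin

text \<open>Atoms of the theory: pairs (s,t) \<in> S \<times> S, standing for Delta(s,t).
Finite conjunctions of atoms are finite subsets F \<subseteq> S \<times> S (all finite since S is).

The Lindenbaum algebra (frame presented by the atoms modulo the axioms) is
realised in the standard way as the frame of saturated ideals of the free
meet-semilattice on the atoms: sets J of finite conjunctions that are
down-closed (F \<in> J, F \<subseteq> G implies G \<in> J, since G entails F) and closed under
the (meet-stabilised) axioms:
  Delta(s,t) |- False  (s not-> t):      insert (s,t) F \<in> J for every F;
  True |- OR_{t. s->t} Delta(s,t)  (s has a successor):
     if insert (s,t) F \<in> J for all successors t then F \<in> J.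
The frame order is inclusion; the element J denotes OR_{F\<in>J} AND F.\<close>

definition lind :: "'a set \<Rightarrow> ('a \<times> 'a) set \<Rightarrow> ('a \<times> 'a) set set set" where
  "lind S T = {J. J \<subseteq> Pow (S \<times> S)
     \<and> (\<forall>F\<in>J. \<forall>G. F \<subseteq> G \<and> G \<subseteq> S \<times> S \<longrightarrow> G \<in> J)
     \<and> (\<forall>s\<in>S. \<forall>t\<in>S. (s, t) \<notin> T \<longrightarrow> (\<forall>F. F \<subseteq> S \<times> S \<longrightarrow> insert (s, t) F \<in> J))
     \<and> (\<forall>s\<in>S. (\<exists>t. (s, t) \<in> T) \<longrightarrow>
          (\<forall>F. F \<subseteq> S \<times> S \<longrightarrow> (\<forall>t. (s, t) \<in> T \<longrightarrow> insert (s, t) F \<in> J) \<longrightarrow> F \<in> J))}"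

definition graph_aut :: "'a set \<Rightarrow> ('a \<times> 'a) set \<Rightarrow> ('a \<Rightarrow> 'a) set" where
  "graph_aut S T = {\<sigma>. \<sigma> permutes S \<and>
     (\<forall>s\<in>S. \<forall>t\<in>S. (s, t) \<in> T \<longleftrightarrow> (\<sigma> s, \<sigma> t) \<in> T)}"

definition lind_phi :: "('a \<Rightarrow> 'a) \<Rightarrow> ('a \<times> 'a) set set \<Rightarrow> ('a \<times> 'a) set set" where
  "lind_phi \<sigma> J = (\<lambda>F. (\<lambda>(a, b). (\<sigma> a, \<sigma> b)) ` F) ` J"

definition phi_kernel :: "'a set \<Rightarrow> ('a \<times> 'a) set \<Rightarrow> ('a \<Rightarrow> 'a) set" where
  "phi_kernel S T = {\<sigma> \<in> graph_aut S T. \<forall>J \<in> lind S T. lind_phi \<sigma> J = J}"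

end

theory Submission
  imports Defs
begin

(* Models of the theory are relations P \<subseteq> T, the atoms true in the model, keeping at least
   one successor of every state that has one; each model yields the saturated ideal of the
   finite conjunctions it refutes.  If T is single-valued, T is the only model and every
   saturated ideal is either the top element or the ideal of T, so all graph automorphisms
   act trivially.  If a state u has two successors, an automorphism in the kernel must
   preserve the models keeping just one edge out of u, which forces it to fix u and each
   successor of u.  Thus in the kernel successors of fixed states are fixed and moved states
   have a single successor.  If the root s0 were moved, the states reaching s0 would form a
   successor-closed set containing the fixed branching state, forcing s0 to be fixed. *)

lemma graph_aut_edge:
  assumes "\<sigma> \<in> graph_aut S T" "T \<subseteq> S \<times> S" "(a, b) \<in> T"
  shows "(\<sigma> a, \<sigma> b) \<in> T"
proof -
  have "a \<in> S" "b \<in> S"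
    using assms(2,3) by auto
  with assms(1,3) show ?thesis
    by (simp add: graph_aut_def)
qed

lemma graph_aut_image_edges:
  assumes "\<sigma> \<in> graph_aut S T" "T \<subseteq> S \<times> S"
  shows "map_prod \<sigma> \<sigma> ` T = T"
proof -
  have p: "\<sigma> permutes S" and edge: "\<And>s t. s \<in> S \<Longrightarrow> t \<in> S \<Longrightarrow> (s, t) \<in> T \<longleftrightarrow> (\<sigma> s, \<sigma> t) \<in> T"
    using assms(1) by (auto simp: graph_aut_def)
  have "(s, t) \<in> map_prod \<sigma> \<sigma> ` T" if "(s, t) \<in> T" for s t
  proof -
    have "s \<in> S" "t \<in> S" using that assms(2) by auto
    then have "(inv \<sigma> s, inv \<sigma> t) \<in> T"
      using that edge permutes_in_image[OF permutes_inv[OF p]] permutes_inverses(1)[OF p] by metis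
    then show ?thesis
      using permutes_inverses(1)[OF p] by (metis map_prod_imageI)
  qed
  then show ?thesis
    using edge assms(2) by auto
qed

lemma graph_aut_rtrancl:
  assumes "\<sigma> \<in> graph_aut S T" "T \<subseteq> S \<times> S" "(a, b) \<in> T\<^sup>*"
  shows "(\<sigma> a, \<sigma> b) \<in> T\<^sup>*"
  using assms(3)
proof (induction rule: rtrancl_induct)
  case (step y z)
  then have "(\<sigma> y, \<sigma> z) \<in> T"
    using graph_aut_edge[OF assms(1,2)] by blast
  with step.IH show ?case
    by (rule rtrancl_into_rtrancl)
qed simp

lemma rtrancl_reaches_back:
  assumes "(r, x) \<in> T" "(x, r) \<in> T\<^sup>*"
    and single: "\<And>u v w. (u, r) \<in> T\<^sup>* \<Longrightarrow> (u, v) \<in> T \<Longrightarrow> (u, w) \<in> T \<Longrightarrow> v = w"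
    and "(r, s) \<in> T\<^sup>*"
  shows "(s, r) \<in> T\<^sup>*"
  using assms(4)
proof (induction rule: rtrancl_induct)
  case (step y z)
  show ?case
  proof (cases "y = r")
    case True
    then have "z = x"
      using single[of r z x] step.hyps(2) assms(1) by simp
    with assms(2) show ?thesis
      by simp
  next
    case False
    with step.IH obtain y' where "(y, y') \<in> T" "(y', r) \<in> T\<^sup>*"
      by (metis converse_rtranclE)
    with single[OF step.IH step.hyps(2)] show ?thesis
      by simp
  qed
qed simp

lemma rooted_graph_aut_eq_id:
  assumes aut: "\<sigma> \<in> graph_aut S T" and "T \<subseteq> S \<times> S"
    and "s0 \<in> S" and reach: "\<forall>s\<in>S. (s0, s) \<in> T\<^sup>*"
    and fixed_succ: "\<And>v t. \<sigma> v = v \<Longrightarrow> (v, t) \<in> T \<Longrightarrow> \<sigma> t = t"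
    and moved_single: "\<And>u x y. \<sigma> u \<noteq> u \<Longrightarrow> (u, x) \<in> T \<Longrightarrow> (u, y) \<in> T \<Longrightarrow> x = y"
    and "s \<in> S" "\<sigma> s = s"
  shows "\<sigma> = id"
proof -
  have p: "\<sigma> permutes S"
    using aut by (simp add: graph_aut_def)
  have fixed_rtrancl: "\<sigma> w = w" if "(v, w) \<in> T\<^sup>*" "\<sigma> v = v" for v w
    using that by (induction rule: rtrancl_induct) (auto intro: fixed_succ)
  have "\<sigma> s0 = s0"
  proof (rule ccontr)
    assume moved: "\<sigma> s0 \<noteq> s0"
    have "inv \<sigma> s0 \<in> S"
      using \<open>s0 \<in> S\<close> permutes_in_image[OF permutes_inv[OF p]] by simp
    then have "(\<sigma> s0, \<sigma> (inv \<sigma> s0)) \<in> T\<^sup>*"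
      using graph_aut_rtrancl[OF aut \<open>T \<subseteq> S \<times> S\<close>] reach by blast
    then have returns: "(\<sigma> s0, s0) \<in> T\<^sup>*"
      by (simp add: permutes_inverses(1)[OF p])
    have "(s0, \<sigma> s0) \<in> T\<^sup>*"
      using reach permutes_in_image[OF p] \<open>s0 \<in> S\<close> by blast
    with moved obtain x where x: "(s0, x) \<in> T" "(x, \<sigma> s0) \<in> T\<^sup>*"
      by (metis converse_rtranclE)
    txt \<open>Every state reaching s0 is moved, so s0 lies on a cycle of states with single successors.\<close>
    have single: "v = w" if "(u, s0) \<in> T\<^sup>*" "(u, v) \<in> T" "(u, w) \<in> T" for u v w
      using moved_single fixed_rtrancl moved that by blast
    have "(s0, s) \<in> T\<^sup>*"
      using reach \<open>s \<in> S\<close> by blast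
    with x(1) rtrancl_trans[OF x(2) returns] single have "(s, s0) \<in> T\<^sup>*"
      by (rule rtrancl_reaches_back)
    with moved fixed_rtrancl \<open>\<sigma> s = s\<close> show False
      by blast
  qed
  show ?thesis
  proof
    fix x
    show "\<sigma> x = id x"
      using fixed_rtrancl[OF _ \<open>\<sigma> s0 = s0\<close>] reach permutes_not_in[OF p] by (cases "x \<in> S") auto
  qed
qed

definition is_model :: "'a set \<Rightarrow> ('a \<times> 'a) set \<Rightarrow> ('a \<times> 'a) set \<Rightarrow> bool" where
  "is_model S T P \<longleftrightarrow> P \<subseteq> T \<and> (\<forall>s\<in>S. (\<exists>t. (s, t) \<in> T) \<longrightarrow> (\<exists>t. (s, t) \<in> P))"

definition model_ideal :: "'a set \<Rightarrow> ('a \<times> 'a) set \<Rightarrow> ('a \<times> 'a) set set" where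
  "model_ideal S P = {F. F \<subseteq> S \<times> S \<and> \<not> F \<subseteq> P}"

lemma lindD:
  assumes "J \<in> lind S T"
  shows lind_subset_Pow: "J \<subseteq> Pow (S \<times> S)"
    and lind_upward: "F \<in> J \<Longrightarrow> F \<subseteq> G \<Longrightarrow> G \<subseteq> S \<times> S \<Longrightarrow> G \<in> J"
    and lind_nonedge: "s \<in> S \<Longrightarrow> t \<in> S \<Longrightarrow> (s, t) \<notin> T \<Longrightarrow> F \<subseteq> S \<times> S \<Longrightarrow> insert (s, t) F \<in> J"
    and lind_cover: "s \<in> S \<Longrightarrow> (s, t0) \<in> T \<Longrightarrow> F \<subseteq> S \<times> S \<Longrightarrow>
      (\<And>t. (s, t) \<in> T \<Longrightarrow> insert (s, t) F \<in> J) \<Longrightarrow> F \<in> J"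
  using assms unfolding lind_def by (simp_all, blast+)

lemma lind_phi_eq_image: "lind_phi \<sigma> J = image (map_prod \<sigma> \<sigma>) ` J"
  by (simp add: lind_phi_def map_prod_def)

lemma model_ideal_in_lind:
  assumes "is_model S T P"
  shows "model_ideal S P \<in> lind S T"
proof -
  have PT: "P \<subseteq> T" and succ: "\<And>s. s \<in> S \<Longrightarrow> (\<exists>t. (s, t) \<in> T) \<Longrightarrow> \<exists>t. (s, t) \<in> P"
    using assms by (auto simp: is_model_def)
  have "F \<in> model_ideal S P"
    if s: "s \<in> S" "(s, t0) \<in> T"
      and F: "F \<subseteq> S \<times> S" "\<forall>t. (s, t) \<in> T \<longrightarrow> insert (s, t) F \<in> model_ideal S P"
    for s t0 F
  proof -
    obtain t where "(s, t) \<in> P"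
      using succ s by blast
    with F PT show ?thesis
      by (auto simp: model_ideal_def)
  qed
  with PT show ?thesis
    unfolding lind_def model_ideal_def by auto
qed

lemma lind_phi_Pow:
  assumes "\<sigma> permutes S"
  shows "lind_phi \<sigma> (Pow (S \<times> S)) = Pow (S \<times> S)"
  by (simp add: lind_phi_eq_image image_Pow_surj map_prod_surj_on permutes_image[OF assms])

lemma lind_phi_model_ideal:
  assumes "\<sigma> permutes S"
  shows "lind_phi \<sigma> (model_ideal S P) = model_ideal S (map_prod \<sigma> \<sigma> ` P)"
proof -
  let ?m = "map_prod \<sigma> \<sigma>"
  have inj: "inj ?m"
    using permutes_inj[OF assms] by (simp add: prod.inj_map)
  have surj: "image ?m ` Pow (S \<times> S) = Pow (S \<times> S)"
    by (simp add: image_Pow_surj map_prod_surj_on permutes_image[OF assms])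
  show ?thesis
    unfolding lind_phi_eq_image
  proof (intro equalityI subsetI)
    fix G assume "G \<in> image ?m ` model_ideal S P"
    then obtain F where "F \<subseteq> S \<times> S" "\<not> F \<subseteq> P" "G = ?m ` F"
      unfolding model_ideal_def by blast
    moreover have "?m ` F \<in> Pow (S \<times> S)"
      using \<open>F \<subseteq> S \<times> S\<close> surj by blast
    ultimately show "G \<in> model_ideal S (?m ` P)"
      by (simp add: model_ideal_def inj_image_subset_iff[OF inj])
  next
    fix G assume "G \<in> model_ideal S (?m ` P)"
    then have "G \<in> image ?m ` Pow (S \<times> S)" "\<not> G \<subseteq> ?m ` P"
      using surj by (auto simp: model_ideal_def)
    then obtain F where "F \<subseteq> S \<times> S" "G = ?m ` F" "\<not> F \<subseteq> P"
      by (auto simp: inj_image_subset_iff[OF inj])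
    then show "G \<in> image ?m ` model_ideal S P"
      by (simp add: model_ideal_def)
  qed
qed

lemma lind_remove_edges:
  assumes "J \<in> lind S T" "T \<subseteq> S \<times> S" "single_valued T" "finite F"
  shows "F \<subseteq> T \<Longrightarrow> G \<subseteq> S \<times> S \<Longrightarrow> F \<union> G \<in> J \<Longrightarrow> G \<in> J"
  using assms(4)
proof (induction F arbitrary: G)
  case (insert e F)
  obtain s t where e: "e = (s, t)" by fastforce
  with insert.prems have "(s, t) \<in> T" by simp
  with assms(2) have "s \<in> S" "t \<in> S" by auto
  have "insert (s, t) G \<in> J"
    using insert.IH[of "insert (s, t) G"] insert.prems \<open>s \<in> S\<close> \<open>t \<in> S\<close> e by auto
  moreover have "t' = t" if "(s, t') \<in> T" for t'
    using assms(3) \<open>(s, t) \<in> T\<close> that by (auto simp: single_valued_def)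
  ultimately show ?case
    using lind_cover[OF assms(1) \<open>s \<in> S\<close> \<open>(s, t) \<in> T\<close> insert.prems(2)] by blast
qed simp

lemma lind_single_valued_cases:
  assumes "finite S" "T \<subseteq> S \<times> S" "single_valued T" "J \<in> lind S T"
  shows "J = Pow (S \<times> S) \<or> J = model_ideal S T"
proof (cases "{} \<in> J")
  case True
  have "Pow (S \<times> S) \<subseteq> J"
    using lind_upward[OF assms(4) True] by blast
  with lind_subset_Pow[OF assms(4)] show ?thesis
    by blast
next
  case False
  have "F \<notin> J" if "F \<subseteq> T" for F
  proof
    assume "F \<in> J"
    moreover have "finite F"
      using that assms(1,2) by (meson finite_SigmaI finite_subset)
    ultimately show False
      using lind_remove_edges[OF assms(4,2,3), of F "{}"] that False by simp
  qed
  moreover have "F \<in> J" if F: "F \<subseteq> S \<times> S" and "\<not> F \<subseteq> T" for F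
  proof -
    obtain s t where "(s, t) \<in> F" "(s, t) \<notin> T"
      using \<open>\<not> F \<subseteq> T\<close> by auto
    moreover have "s \<in> S" "t \<in> S"
      using F \<open>(s, t) \<in> F\<close> by auto
    ultimately show ?thesis
      using lind_nonedge[OF assms(4) _ _ _ F] by (metis insert_absorb)
  qed
  ultimately have "J = model_ideal S T"
    using lind_subset_Pow[OF assms(4)] unfolding model_ideal_def by blast
  then show ?thesis ..
qed

lemma phi_kernel_single_valued:
  assumes "finite S" "T \<subseteq> S \<times> S" "single_valued T"
  shows "phi_kernel S T = graph_aut S T"
proof -
  have "lind_phi \<sigma> J = J" if "\<sigma> \<in> graph_aut S T" "J \<in> lind S T" for \<sigma> J
  proof -
    have "\<sigma> permutes S"
      using that(1) by (simp add: graph_aut_def)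
    then show ?thesis
      using lind_single_valued_cases[OF assms that(2)] lind_phi_Pow lind_phi_model_ideal
        graph_aut_image_edges[OF that(1) assms(2)] by metis
  qed
  then show ?thesis
    unfolding phi_kernel_def by blast
qed

lemma phi_kernel_subset: "phi_kernel S T \<subseteq> graph_aut S T"
  by (simp add: phi_kernel_def)

lemma id_in_phi_kernel: "id \<in> phi_kernel S T"
  unfolding phi_kernel_def graph_aut_def lind_phi_def
  by (auto simp: permutes_id)

lemma phi_kernel_preserves_model_nonedges:
  assumes "\<sigma> \<in> phi_kernel S T" "is_model S T P" "a \<in> S" "b \<in> S" "(a, b) \<notin> P"
  shows "(\<sigma> a, \<sigma> b) \<notin> P"
proof -
  have "{(a, b)} \<in> model_ideal S P"
    using assms(3-5) by (simp add: model_ideal_def)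
  then have "image (map_prod \<sigma> \<sigma>) {(a, b)} \<in> lind_phi \<sigma> (model_ideal S P)"
    unfolding lind_phi_eq_image by (rule imageI)
  also have "lind_phi \<sigma> (model_ideal S P) = model_ideal S P"
    using assms(1) model_ideal_in_lind[OF assms(2)] by (simp add: phi_kernel_def)
  finally show ?thesis
    by (simp add: model_ideal_def)
qed

lemma phi_kernel_fixes_branching:
  assumes "\<sigma> \<in> phi_kernel S T" "T \<subseteq> S \<times> S" "(u, t1) \<in> T" "(u, t2) \<in> T" "t1 \<noteq> t2"
  shows "\<sigma> u = u" and "\<sigma> t1 = t1"
proof -
  define P where "P x = {e \<in> T. fst e = u \<longrightarrow> snd e = x}" for x
  have model: "is_model S T (P x)" if "(u, x) \<in> T" for x
  proof -
    have "\<exists>t'. (s, t') \<in> P x" if "(s, t) \<in> T" for s t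
      using \<open>(u, x) \<in> T\<close> that by (cases "s = u") (auto simp: P_def)
    then show ?thesis
      by (auto simp: is_model_def P_def)
  qed
  note edge = graph_aut_edge[OF subsetD[OF phi_kernel_subset assms(1)] assms(2)]
  have S: "u \<in> S" "t1 \<in> S" "t2 \<in> S"
    using assms(2-4) by auto
  have "(\<sigma> u, \<sigma> t2) \<notin> P t1"
    using phi_kernel_preserves_model_nonedges[OF assms(1) model[OF assms(3)] S(1,3)] assms(5)
    by (simp add: P_def)
  with edge[OF assms(4)] show "\<sigma> u = u"
    by (simp add: P_def)
  show "\<sigma> t1 = t1"
  proof (rule ccontr)
    assume "\<sigma> t1 \<noteq> t1"
    moreover have "(u, \<sigma> t1) \<in> T"
      using edge[OF assms(3)] \<open>\<sigma> u = u\<close> by simp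
    ultimately have "(\<sigma> u, \<sigma> t1) \<notin> P (\<sigma> t1)"
      using phi_kernel_preserves_model_nonedges[OF assms(1) model[of "\<sigma> t1"] S(1,2)]
      by (simp add: P_def)
    with \<open>(u, \<sigma> t1) \<in> T\<close> \<open>\<sigma> u = u\<close> show False
      by (simp add: P_def)
  qed
qed

lemma phi_kernel_fixes_successor:
  assumes "\<sigma> \<in> phi_kernel S T" "T \<subseteq> S \<times> S" "\<sigma> v = v" "(v, t) \<in> T"
  shows "\<sigma> t = t"
proof (cases "\<exists>t'. (v, t') \<in> T \<and> t' \<noteq> t")
  case True
  then obtain t' where "(v, t') \<in> T" "t \<noteq> t'"
    by blast
  then show ?thesis
    using phi_kernel_fixes_branching(2)[OF assms(1,2,4)] by simp
next
  case False
  have "(\<sigma> v, \<sigma> t) \<in> T"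
    using graph_aut_edge[OF subsetD[OF phi_kernel_subset assms(1)] assms(2,4)] .
  with False assms(3) show ?thesis
    by (metis (mono_tags))
qed

lemma phi_kernel_eq_id_if_branching:
  assumes "T \<subseteq> S \<times> S" "s0 \<in> S" "\<forall>s\<in>S. (s0, s) \<in> T\<^sup>*"
    and "(s, t1) \<in> T" "(s, t2) \<in> T" "t1 \<noteq> t2"
  shows "phi_kernel S T = {id}"
proof -
  have "\<sigma> = id" if k: "\<sigma> \<in> phi_kernel S T" for \<sigma>
  proof (rule rooted_graph_aut_eq_id[OF subsetD[OF phi_kernel_subset k] assms(1-3)])
    show "\<sigma> t = t" if "\<sigma> v = v" "(v, t) \<in> T" for v t
      using phi_kernel_fixes_successor[OF k assms(1) that] .
    show "x = y" if "\<sigma> u \<noteq> u" "(u, x) \<in> T" "(u, y) \<in> T" for u x y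
      using phi_kernel_fixes_branching(1)[OF k assms(1) that(2,3)] that(1) by auto
    show "s \<in> S"
      using assms(1,4) by auto
    show "\<sigma> s = s"
      using phi_kernel_fixes_branching(1)[OF k assms(1,4-6)] .
  qed
  with id_in_phi_kernel show ?thesis
    by blast
qed

theorem mainTheorem15:
  fixes S :: "'a set" and T :: "('a \<times> 'a) set" and s0 :: 'a
  assumes "finite S"
    and "T \<subseteq> S \<times> S"
    and "s0 \<in> S"
    and "\<forall>s\<in>S. (s0, s) \<in> T\<^sup>*"
  shows "(phi_kernel S T = {id} \<or> phi_kernel S T = graph_aut S T)
    \<and> ((\<exists>s\<in>S. \<exists>t1 t2. t1 \<noteq> t2 \<and> (s, t1) \<in> T \<and> (s, t2) \<in> T) \<longrightarrow> phi_kernel S T = {id})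
    \<and> ((\<forall>s\<in>S. \<forall>t1 t2. (s, t1) \<in> T \<and> (s, t2) \<in> T \<longrightarrow> t1 = t2) \<longrightarrow> phi_kernel S T = graph_aut S T)"
proof -
  have single_valued_iff:
    "single_valued T \<longleftrightarrow> (\<forall>s\<in>S. \<forall>t1 t2. (s, t1) \<in> T \<and> (s, t2) \<in> T \<longrightarrow> t1 = t2)"
    using assms(2) unfolding single_valued_def by blast
  have branching: "phi_kernel S T = {id}"
    if "\<exists>s\<in>S. \<exists>t1 t2. t1 \<noteq> t2 \<and> (s, t1) \<in> T \<and> (s, t2) \<in> T"
    using that phi_kernel_eq_id_if_branching[OF assms(2-4)] by blast
  have deterministic: "phi_kernel S T = graph_aut S T"
    if "\<forall>s\<in>S. \<forall>t1 t2. (s, t1) \<in> T \<and> (s, t2) \<in> T \<longrightarrow> t1 = t2"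
    using phi_kernel_single_valued[OF assms(1,2)] that single_valued_iff by blast
  show ?thesis
    using branching deterministic by blast
qed

end
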